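(* Consider the setting and hypotheses of the data-driven invariance theorem: the unknown system $\dot x=A_\star Z(x)+B_\star W(x)u$, data $\dot x^j=A_\star z^j+B_\star v^j+d^j$ with $|d^j|^2\le\omega$ ($j=0,\dots,T-1$), $\epsilon>0$, and a symmetric $A_{\mathrm{i}}\in\mathbb{R}^{p\times p}$, $B_{\mathrm{i}}\in\mathbb{R}^{p\times n}$, $\tau_0,\dots,\tau_{T-1}$ satisfying $$\begin{bmatrix}-I-\sum_{j}\tau_jc_j & B_{\mathrm{i}}^\top-\sum_{j}\tau_jb_j^\top & B_{\mathrm{i}}^\top\\ B_{\mathrm{i}}-\sum_{j}\tau_jb_j & A_{\mathrm{i}}-\sum_{j}\tau_ja_j & 0\\ B_{\mathrm{i}} & 0 & -A_{\mathrm{i}}\end{bmatrix}\preceq 0,\quad A_{\mathrm{i}}\succ 0,\quad \tau_j\ge0,$$ with $\bar\zeta:=-A_{\mathrm{i}}^{-1}B_{\mathrm{i}}$, $\bar P:=A_{\mathrm{i}}^{-1/2}$, $\bar Q:=I_n$. Let $\sigma_1,\dots,\sigma_q:\mathbb{R}^n\to\mathbb{R}$ be polynomials, $\lambda:\mathbb{R}^n\to\mathbb{R}$ a polynomial with $\lambda(x)\ge0$ for all $x$, and $\bar\eta>0$. Define $\mathcal{S}:=\{x:\sigma_j(x)\le0,\ j=1,\dots,q\}$ and, for $\theta\ge0$, $\mathcal{L}_\theta:=\{x:\lambda(x)\le\theta\}$. Suppose there exist polynomials $\ell,\eta,h:\mathbb{R}^n\to\mathbb{R}$, a polynomial $K:\mathbb{R}^n\to\mathbb{R}^m$,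 SOS polynomials $s_1,\dots,s_q,\varsigma\in\Sigma$ and $\theta\ge0$ such that $$\eta-\bar\eta\in\Sigma,\quad -H\in\Sigma_{1+p+n},\quad \varsigma(\lambda-\theta)-h\in\Sigma,\quad s_jh-\sigma_j\in\Sigma\ (j=1,\dots,q),$$ where $$H(x):=\begin{bmatrix}\ell(x)h(x)+\epsilon+\frac{\partial h}{\partial x}(x)\,\bar\zeta^\top\begin{bmatrix}Z(x)\\ W(x)K(x)\end{bmatrix} & \star & \star\\ \eta(x)\bar P\begin{bmatrix}Z(x)\\ W(x)K(x)\end{bmatrix} & -2\eta(x)I_p & \star\\ \bar Q^{1/2}\frac{\partial h}{\partial x}(x)^\top & 0 & -2\eta(x)I_n\end{bmatrix}.$$ Then $\mathcal{I}:=\{x\in\mathbb{R}^n:h(x)\le0\}$ is invariant for the closed-loop system $\dot x=A_\star Z(x)+B_\star W(x)K(x)$ and $\mathcal{L}_\theta\subseteq\mathcal{I}\subseteq\mathcal{S}$. (In particular this holds for any solution of the program maximizing $\theta$ subject to these constraints.)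
   Context: $A_\star\in\mathbb{R}^{n\times N_A}$, $B_\star\in\mathbb{R}^{n\times N_B}$ are unknown constant matrices; $Z:\mathbb{R}^n\to\mathbb{R}^{N_A}$ is a known vector of monomials and $W:\mathbb{R}^n\to\mathbb{R}^{N_B\times m}$ a known matrix of monomials; $p:=N_A+N_B$; $z^j=Z(x^j)$, $v^j=W(x^j)u^j$ for sampled states/inputs and $\dot x^j$ the sampled derivatives; $c_j:=-\omega I_n+\dot x^j(\dot x^j)^\top$, $b_j:=-\begin{bmatrix}z^j\\ v^j\end{bmatrix}(\dot x^j)^\top$, $a_j:=\begin{bmatrix}z^j\\ v^j\end{bmatrix}\begin{bmatrix}z^j\\ v^j\end{bmatrix}^\top$; sums run over $j=0,\dots,T-1$. $\Sigma$ is the set of SOS polynomials: polynomials $h$ with $h=\sum_{i=1}^k h_i^2$ for some polynomials $h_i$. $\Sigma_r$ is the set of SOS matrix polynomials: $r\times r$ matrix polynomials $H$ with $H(x)=\sum_{i=1}^kH_i(x)^\top H_i(x)$ for some $r\times r$ matrix polynomials $H_i$. $\star$ denotes blocks determined by symmetry; $\frac{\partial h}{\partial x}(x)$ is the gradient as a row vector. A set $\mathcal{I}$ is invariant for $\dot x=a(x)$ ($a$ polynomial) if every maximal solution starting in $\mathcal{I}$ remains in $\mathcal{I}$ on its whole interval of existence. *)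

theory Defs
  imports "HOL-Analysis.Analysis"
begin

inductive poly_fun :: "(real ^ 'n \<Rightarrow> real) \<Rightarrow> bool" where
  poly_const: "poly_fun (\<lambda>x. c)"
| poly_coord: "poly_fun (\<lambda>x. x $ i)"
| poly_add: "poly_fun f \<Longrightarrow> poly_fun g \<Longrightarrow> poly_fun (\<lambda>x. f x + g x)"
| poly_mult: "poly_fun f \<Longrightarrow> poly_fun g \<Longrightarrow> poly_fun (\<lambda>x. f x * g x)"

definition poly_vec :: "(real ^ 'n \<Rightarrow> real ^ 'k) \<Rightarrow> bool" where
  "poly_vec F \<longleftrightarrow> (\<forall>i. poly_fun (\<lambda>x. F x $ i))"

definition poly_mat :: "(real ^ 'n \<Rightarrow> real ^ 'c ^ 'r) \<Rightarrow> bool" where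
  "poly_mat F \<longleftrightarrow> (\<forall>i j. poly_fun (\<lambda>x. F x $ i $ j))"

definition monomial_fun :: "(real ^ 'n \<Rightarrow> real) \<Rightarrow> bool" where
  "monomial_fun f \<longleftrightarrow> (\<exists>k :: 'n \<Rightarrow> nat. f = (\<lambda>x. \<Prod>i\<in>UNIV. (x $ i) ^ k i))"

definition sos :: "(real ^ 'n \<Rightarrow> real) \<Rightarrow> bool" where
  "sos f \<longleftrightarrow> (\<exists>hs. (\<forall>h\<in>set hs. poly_fun h) \<and> f = (\<lambda>x. \<Sum>h\<leftarrow>hs. (h x)^2))"

definition sos_mat :: "(real ^ 'n \<Rightarrow> real ^ 'r ^ 'r) \<Rightarrow> bool" where
  "sos_mat H \<longleftrightarrow> (\<exists>Hs :: (real ^ 'n \<Rightarrow> real ^ 'r ^ 'r) list.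
      (\<forall>Hi\<in>set Hs. poly_mat Hi) \<and> H = (\<lambda>x. \<Sum>Hi\<leftarrow>Hs. transpose (Hi x) ** Hi x))"

definition symmetric_mat :: "real ^ 'n ^ 'n \<Rightarrow> bool" where
  "symmetric_mat M \<longleftrightarrow> transpose M = M"

definition pos_def :: "real ^ 'n ^ 'n \<Rightarrow> bool" where
  "pos_def M \<longleftrightarrow> symmetric_mat M \<and> (\<forall>v. v \<noteq> 0 \<longrightarrow> v \<bullet> (M *v v) > 0)"

definition pos_semidef :: "real ^ 'n ^ 'n \<Rightarrow> bool" where
  "pos_semidef M \<longleftrightarrow> symmetric_mat M \<and> (\<forall>v. v \<bullet> (M *v v) \<ge> 0)"

definition neg_semidef :: "real ^ 'n ^ 'n \<Rightarrow> bool" where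
  "neg_semidef M \<longleftrightarrow> symmetric_mat M \<and> (\<forall>v. v \<bullet> (M *v v) \<le> 0)"

definition psd_sqrt :: "real ^ 'n ^ 'n \<Rightarrow> real ^ 'n ^ 'n" where
  "psd_sqrt M = (THE S. pos_semidef S \<and> S ** S = M)"

definition blk3 ::
  "real ^ 'c1 ^ 'r1 \<Rightarrow> real ^ 'c2 ^ 'r1 \<Rightarrow> real ^ 'c3 ^ 'r1 \<Rightarrow>
   real ^ 'c1 ^ 'r2 \<Rightarrow> real ^ 'c2 ^ 'r2 \<Rightarrow> real ^ 'c3 ^ 'r2 \<Rightarrow>
   real ^ 'c1 ^ 'r3 \<Rightarrow> real ^ 'c2 ^ 'r3 \<Rightarrow> real ^ 'c3 ^ 'r3 \<Rightarrow>
   real ^ ('c1 + 'c2 + 'c3) ^ ('r1 + 'r2 + 'r3)" where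
  "blk3 M11 M12 M13 M21 M22 M23 M31 M32 M33 = (\<chi> i j.
     (case i of
        Inl i1 \<Rightarrow> (case j of Inl j1 \<Rightarrow> M11 $ i1 $ j1 | Inr (Inl j2) \<Rightarrow> M12 $ i1 $ j2
                            | Inr (Inr j3) \<Rightarrow> M13 $ i1 $ j3)
      | Inr (Inl i2) \<Rightarrow> (case j of Inl j1 \<Rightarrow> M21 $ i2 $ j1 | Inr (Inl j2) \<Rightarrow> M22 $ i2 $ j2
                            | Inr (Inr j3) \<Rightarrow> M23 $ i2 $ j3)
      | Inr (Inr i3) \<Rightarrow> (case j of Inl j1 \<Rightarrow> M31 $ i3 $ j1 | Inr (Inl j2) \<Rightarrow> M32 $ i3 $ j2
                            | Inr (Inr j3) \<Rightarrow> M33 $ i3 $ j3)))"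

definition col_mat :: "real ^ 'k \<Rightarrow> real ^ unit ^ 'k" where
  "col_mat v = (\<chi> i j. v $ i)"

definition scal_mat :: "real \<Rightarrow> real ^ unit ^ unit" where
  "scal_mat a = (\<chi> i j. a)"

definition outer :: "real ^ 'r \<Rightarrow> real ^ 'c \<Rightarrow> real ^ 'c ^ 'r" where
  "outer u v = (\<chi> i j. u $ i * v $ j)"

definition stack :: "real ^ 'a \<Rightarrow> real ^ 'b \<Rightarrow> real ^ ('a + 'b)" where
  "stack u v = (\<chi> k. case k of Inl i \<Rightarrow> u $ i | Inr j \<Rightarrow> v $ j)"

text \<open>Gradient of h at x (the row vector dh/dx(x), stored as a vector).\<close>
definition grad :: "(real ^ 'n \<Rightarrow> real) \<Rightarrow> real ^ 'n \<Rightarrow> real ^ 'n" where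
  "grad h x = (\<chi> i. frechet_derivative h (at x) (axis i 1))"

definition forward_interval :: "real set \<Rightarrow> bool" where
  "forward_interval J \<longleftrightarrow> (\<exists>b>0. J = {0..<b}) \<or> J = {0..}"

definition is_solution ::
  "(real ^ 'n \<Rightarrow> real ^ 'n) \<Rightarrow> (real \<Rightarrow> real ^ 'n) \<Rightarrow> real set \<Rightarrow> bool" where
  "is_solution f x J \<longleftrightarrow> (\<forall>t\<in>J. (x has_vector_derivative f (x t)) (at t within J))"

definition maximal_solution ::
  "(real ^ 'n \<Rightarrow> real ^ 'n) \<Rightarrow> (real \<Rightarrow> real ^ 'n) \<Rightarrow> real set \<Rightarrow> bool" where
  "maximal_solution f x J \<longleftrightarrow> forward_interval J \<and> is_solution f x J \<and>
     \<not> (\<exists>J' y. forward_interval J' \<and> J \<subset> J' \<and> is_solution f y J' \<and> (\<forall>t\<in>J. y t = x t))"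

definition invariant_set :: "(real ^ 'n \<Rightarrow> real ^ 'n) \<Rightarrow> (real ^ 'n) set \<Rightarrow> bool" where
  "invariant_set f I \<longleftrightarrow>
     (\<forall>x J. maximal_solution f x J \<and> x 0 \<in> I \<longrightarrow> (\<forall>t\<in>J. x t \<in> I))"

end

theory Submission
  imports Defs
begin

text \<open>The LMI certifies, by the S-procedure applied to the noisy samples, that the true coefficient
  matrix \<open>\<zeta> = [A\<^sub>\<star> B\<^sub>\<star>]\<^sup>T\<close> and the estimate \<open>\<zeta>\<^sub>0 = -A\<^sub>i\<^sup>-\<^sup>1 B\<^sub>i\<close> satisfy \<open>(\<zeta> - \<zeta>\<^sub>0)\<^sup>T A\<^sub>i (\<zeta> - \<zeta>\<^sub>0) \<preceq> I\<close>. Evaluating the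
  nonpositive matrix \<open>H(x)\<close> at a suitable vector bounds \<open>l h + \<epsilon> + \<nabla>h \<zeta>\<^sub>0\<^sup>T w\<close> (with
  \<open>w = (Z, W K)\<close>) by \<open>-(\<eta>/2 |P w|\<^sup>2 + |\<nabla>h|\<^sup>2/(2\<eta>))\<close>, \<open>P = (A\<^sub>i\<^sup>-\<^sup>1)\<^sup>1\<^sup>/\<^sup>2\<close>, and Cauchy-Schwarz in the \<open>A\<^sub>i\<close>-inner
  product shows that this pays for the uncertainty \<open>\<nabla>h (\<zeta> - \<zeta>\<^sub>0)\<^sup>T w\<close>. Hence the
  closed-loop vector field satisfies \<open>\<nabla>h \<bullet> f \<le> -l h - \<epsilon> < 0\<close> wherever \<open>h = 0\<close>, so no solution can
  leave \<open>{h \<le> 0}\<close>. The set inclusions follow from the nonnegativity of SOS polynomials.\<close>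

lemma sum_UNIV_Plus:
  "(\<Sum>i\<in>(UNIV::('a::finite + 'b::finite) set). f i) = (\<Sum>i\<in>UNIV. f (Inl i)) + (\<Sum>j\<in>UNIV. f (Inr j))"
  using sum.Plus[of "UNIV::'a set" "UNIV::'b set" f] by (simp add: comp_def)

lemma inner_stack: "stack u v \<bullet> stack u' v' = u \<bullet> u' + v \<bullet> v'"
  by (simp add: inner_vec_def stack_def sum_UNIV_Plus)

lemma blk3_mult_stack:
  "blk3 M11 M12 M13 M21 M22 M23 M31 M32 M33 *v stack v1 (stack v2 v3)
   = stack (M11 *v v1 + M12 *v v2 + M13 *v v3)
       (stack (M21 *v v1 + M22 *v v2 + M23 *v v3) (M31 *v v1 + M32 *v v2 + M33 *v v3))"
  unfolding blk3_def stack_def matrix_vector_mult_def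
  by (auto simp: vec_eq_iff sum_UNIV_Plus split: sum.splits)

lemma inner_stack_blk3_mult_stack:
  "stack v1 (stack v2 v3) \<bullet> (blk3 M11 M12 M13 M21 M22 M23 M31 M32 M33 *v stack v1 (stack v2 v3))
   = v1 \<bullet> (M11 *v v1) + v1 \<bullet> (M12 *v v2) + v1 \<bullet> (M13 *v v3)
   + v2 \<bullet> (M21 *v v1) + v2 \<bullet> (M22 *v v2) + v2 \<bullet> (M23 *v v3)
   + v3 \<bullet> (M31 *v v1) + v3 \<bullet> (M32 *v v2) + v3 \<bullet> (M33 *v v3)"
  by (simp add: blk3_mult_stack inner_stack inner_add_right)

lemma matrix_vector_mult_uminus_left: "(- A) *v x = - (A *v (x::real^_))"
  by (simp add: matrix_vector_mult_def vec_eq_iff sum_negf)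

lemma matrix_vector_mult_sum_left: "(sum f S) *v x = (\<Sum>i\<in>S. f i *v x)"
  by (induction S rule: infinite_finite_induct) (auto simp: matrix_vector_mult_add_rdistrib)

lemma inner_transpose_mult: "x \<bullet> (transpose A *v y) = (A *v x) \<bullet> (y::real^_)"
proof -
  have "x \<bullet> (B *v y) = (transpose B *v x) \<bullet> y" for B :: "real^_^_"
    by (simp add: dot_lmul_matrix)
  from this[of "transpose A"] show ?thesis by simp
qed

lemma inner_sum_scaleR_mult:
  "x \<bullet> ((\<Sum>j\<in>S. \<tau> j *\<^sub>R C j) *v y) = (\<Sum>j\<in>S. \<tau> j * (x \<bullet> (C j *v (y::real^_))))"
  by (simp add: matrix_vector_mult_sum_left inner_sum_right scaleR_matrix_vector_assoc[symmetric])

lemma outer_mult_vector: "outer u v *v x = (v \<bullet> x) *\<^sub>R (u::real^'n)"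
  by (simp add: vec_eq_iff outer_def matrix_vector_mult_def inner_vec_def sum_distrib_left algebra_simps)

lemma transpose_outer: "transpose (outer u v) = outer v u"
  by (simp add: transpose_def outer_def vec_eq_iff mult.commute)

lemma transpose_uminus: "transpose (- A) = - transpose (A::real^'n^'m)"
  by (simp add: transpose_def vec_eq_iff)

lemma matrix_vector_mult_axis_nth: "((A::real^'n^'m) *v axis j 1) $ i = A $ i $ j"
  by (simp add: matrix_vector_mult_def axis_def if_distrib cong: if_cong)

lemma trace_eq_sum_axis_forms: "trace (A::real^'n^'n) = (\<Sum>i\<in>UNIV. axis i 1 \<bullet> (A *v axis i 1))"
  by (simp add: trace_def inner_axis' matrix_vector_mult_axis_nth)

lemma symmetric_mat_inner_mult:
  fixes M :: "real^'n^'n"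
  assumes "symmetric_mat M"
  shows "x \<bullet> (M *v y) = (M *v x) \<bullet> y"
  by (metis assms inner_transpose_mult symmetric_mat_def)

lemma quadratic_form_add_scaleR:
  fixes M :: "real^'n^'n"
  assumes "symmetric_mat M"
  shows "(x + t *\<^sub>R y) \<bullet> (M *v (x + t *\<^sub>R y))
       = x \<bullet> (M *v x) + 2 * t * (y \<bullet> (M *v x)) + t\<^sup>2 * (y \<bullet> (M *v y))"
  using symmetric_mat_inner_mult[OF assms, of x y]
  by (simp add: matrix_vector_right_distrib matrix_vector_mult_scaleR inner_add_left inner_add_right
      inner_commute[of "M *v x" y] algebra_simps power2_eq_square)

lemma linear_coeff_zero_if_quadratic_nonpos:
  fixes c d :: real
  assumes "\<And>t. 2 * t * c + t\<^sup>2 * d \<le> 0"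
  shows "c = 0"
proof (rule ccontr)
  assume "c \<noteq> 0"
  define t where "t = c / (\<bar>d\<bar> + 1)"
  have t: "t * (\<bar>d\<bar> + 1) = c"
    by (simp add: t_def add_pos_nonneg)
  have "c\<^sup>2 * (2 * (\<bar>d\<bar> + 1) + d) = (2 * t * c + t\<^sup>2 * d) * (\<bar>d\<bar> + 1)\<^sup>2"
    unfolding t[symmetric] by algebra
  also have "\<dots> \<le> 0"
    using assms[of t] by (simp add: mult_nonpos_nonneg)
  finally show False
    using \<open>c \<noteq> 0\<close> by (smt (verit) mult_pos_pos zero_less_power2)
qed

section \<open>Square roots of positive semidefinite matrices\<close>

lemma quadratic_form_max_on_subspace:
  fixes M :: "real^'n^'n"
  assumes S: "subspace S" and "S \<noteq> {0}"
  obtains v where "v \<in> S" "norm v = 1" "\<And>y. y \<in> S \<Longrightarrow> y \<bullet> (M *v y) \<le> (v \<bullet> (M *v v)) * (y \<bullet> y)"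
proof -
  let ?K = "S \<inter> sphere 0 1"
  obtain x where x: "x \<in> S" "x \<noteq> 0" using assms subspace_0 by blast
  hence "x /\<^sub>R norm x \<in> ?K" using S by (simp add: subspace_scale)
  moreover have "compact ?K"
    by (simp add: S closed_subspace closed_Int_compact)
  moreover have "continuous_on ?K (\<lambda>v. v \<bullet> (M *v v))"
    by (intro continuous_intros linear_continuous_on) (auto intro: bounded_linear_intros)
  ultimately obtain v where v: "v \<in> ?K" and vmax: "\<And>y. y \<in> ?K \<Longrightarrow> y \<bullet> (M *v y) \<le> v \<bullet> (M *v v)"
    using continuous_attains_sup[of ?K] by blast
  have "y \<bullet> (M *v y) \<le> (v \<bullet> (M *v v)) * (y \<bullet> y)" if y: "y \<in> S" for y
  proof (cases "y = 0")
    case False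
    have "y /\<^sub>R norm y \<in> ?K" using y False S by (simp add: subspace_scale)
    from vmax[OF this] have "(y \<bullet> (M *v y)) / (norm y)\<^sup>2 \<le> v \<bullet> (M *v v)"
      by (simp add: matrix_vector_mult_scaleR power2_eq_square field_simps)
    thus ?thesis using False by (simp add: field_simps power2_norm_eq_inner)
  qed simp
  with v that show ?thesis by auto
qed

text \<open>A maximiser of the Rayleigh quotient on an invariant subspace is an eigenvector: the first
  variation of \<open>y \<bullet> M y - l (y \<bullet> y)\<close> at the maximiser vanishes in every direction of the subspace.\<close>
lemma symmetric_mat_eigenvector_in_subspace:
  fixes M :: "real^'n^'n"
  assumes sym: "symmetric_mat M" and S: "subspace S" and inv: "\<And>x. x \<in> S \<Longrightarrow> M *v x \<in> S"
    and "S \<noteq> {0}"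
  shows "\<exists>v\<in>S. norm v = 1 \<and> M *v v = (v \<bullet> (M *v v)) *\<^sub>R v"
proof -
  obtain v where vS: "v \<in> S" and vn: "norm v = 1"
    and vmax: "\<And>y. y \<in> S \<Longrightarrow> y \<bullet> (M *v y) \<le> (v \<bullet> (M *v v)) * (y \<bullet> y)"
    using quadratic_form_max_on_subspace[OF S \<open>S \<noteq> {0}\<close>] by blast
  define l where "l = v \<bullet> (M *v v)"
  have vv: "v \<bullet> v = 1" using vn by (simp add: power2_norm_eq_inner[symmetric])
  have orth: "w \<bullet> (M *v v - l *\<^sub>R v) = 0" if w: "w \<in> S" for w
  proof (rule linear_coeff_zero_if_quadratic_nonpos)
    fix t
    have vtw: "v + t *\<^sub>R w \<in> S" using S vS w by (simp add: subspace_add subspace_scale)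
    have "l + 2 * t * (w \<bullet> (M *v v)) + t\<^sup>2 * (w \<bullet> (M *v w)) \<le> l * ((v + t *\<^sub>R w) \<bullet> (v + t *\<^sub>R w))"
      using vmax[OF vtw] quadratic_form_add_scaleR[OF sym, of v t w] by (simp add: l_def)
    also have "(v + t *\<^sub>R w) \<bullet> (v + t *\<^sub>R w) = 1 + 2 * t * (w \<bullet> v) + t\<^sup>2 * (w \<bullet> w)"
      using vv by (simp add: inner_add_left inner_add_right inner_commute[of v w] algebra_simps power2_eq_square)
    finally show "2 * t * (w \<bullet> (M *v v - l *\<^sub>R v)) + t\<^sup>2 * (w \<bullet> (M *v w) - l * (w \<bullet> w)) \<le> 0"
      by (simp add: inner_diff_right algebra_simps)
  qed
  have "M *v v - l *\<^sub>R v \<in> S" using S vS inv by (simp add: subspace_diff subspace_scale)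
  from orth[OF this] have "M *v v = l *\<^sub>R v" by simp
  then show ?thesis using vS vn by (auto simp: l_def)
qed

lemma symmetric_mat_eigenvector_orthogonal_invariant:
  fixes M :: "real^'n^'n"
  assumes "symmetric_mat M" and "M *v v = \<mu> *\<^sub>R v" and "v \<bullet> x = 0"
  shows "v \<bullet> (M *v x) = 0"
  using assms by (simp add: symmetric_mat_inner_mult[of M v x])

lemma symmetric_mat_orthonormal_eigenbasis:
  fixes M :: "real^'n^'n"
  assumes sym: "symmetric_mat M"
  shows "subspace S \<Longrightarrow> (\<forall>x\<in>S. M *v x \<in> S) \<Longrightarrow>
    \<exists>B. finite B \<and> B \<subseteq> S \<and> pairwise orthogonal B \<and>
        (\<forall>u\<in>B. norm u = 1 \<and> M *v u = (u \<bullet> (M *v u)) *\<^sub>R u) \<and> S \<subseteq> span B"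
proof (induction "dim S" arbitrary: S rule: less_induct)
  case less
  show ?case
  proof (cases "S \<subseteq> {0}")
    case True
    then show ?thesis by (intro exI[of _ "{}"]) auto
  next
    case False
    then obtain v where vS: "v \<in> S" and vn: "norm v = 1" and ev: "M *v v = (v \<bullet> (M *v v)) *\<^sub>R v"
      using symmetric_mat_eigenvector_in_subspace[OF sym less.prems(1)] less.prems(2) by blast
    have vv: "v \<bullet> v = 1" using vn by (simp add: power2_norm_eq_inner[symmetric])
    define S' where "S' = {x\<in>S. v \<bullet> x = 0}"
    have sub': "subspace S'"
      using less.prems(1) unfolding S'_def subspace_def by (auto simp: inner_add_right)
    have inv': "\<forall>x\<in>S'. M *v x \<in> S'"
      using symmetric_mat_eigenvector_orthogonal_invariant[OF sym ev] less.prems(2)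
      unfolding S'_def by blast
    have "v \<notin> S'" using vv unfolding S'_def by auto
    hence "S' \<subset> S" using vS unfolding S'_def by blast
    hence "dim S' < dim S"
      using sub' less.prems(1) by (intro dim_psubset) (simp add: span_eq_iff[THEN iffD2])
    from less.hyps[OF this sub' inv'] obtain B where
      B: "finite B" "B \<subseteq> S'" "pairwise orthogonal B"
         "\<forall>u\<in>B. norm u = 1 \<and> M *v u = (u \<bullet> (M *v u)) *\<^sub>R u" "S' \<subseteq> span B" by blast
    have "S \<subseteq> span (insert v B)"
    proof
      fix x assume "x \<in> S"
      hence "x - (v \<bullet> x) *\<^sub>R v \<in> S'"
        unfolding S'_def using vS vv less.prems(1)
        by (auto simp: subspace_diff subspace_scale inner_diff_right)
      then show "x \<in> span (insert v B)" using B(5) span_breakdown_eq by blast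
    qed
    moreover have "pairwise orthogonal (insert v B)"
      using B(2,3) unfolding pairwise_insert S'_def by (auto simp: orthogonal_def inner_commute)
    ultimately show ?thesis
      using B vS vn ev unfolding S'_def by (intro exI[of _ "insert v B"]) auto
  qed
qed

lemma inner_orthonormal_sum:
  fixes B :: "(real^'n) set"
  assumes "finite B" "pairwise orthogonal B" "\<forall>u\<in>B. norm u = 1" "w \<in> B"
  shows "w \<bullet> (\<Sum>u\<in>B. c u *\<^sub>R u) = c w"
proof -
  have "w \<bullet> (\<Sum>u\<in>B. c u *\<^sub>R u) = (\<Sum>u\<in>B. c u * (w \<bullet> u))"
    by (simp add: inner_sum_right)
  also have "\<dots> = c w * (w \<bullet> w) + (\<Sum>u\<in>B-{w}. c u * (w \<bullet> u))"
    using assms by (simp add: sum.remove)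
  also have "(\<Sum>u\<in>B-{w}. c u * (w \<bullet> u)) = 0"
    using assms(2,4) by (intro sum.neutral) (auto simp: pairwise_def orthogonal_def)
  also have "w \<bullet> w = 1" using assms(3,4) by (metis norm_eq_1)
  finally show ?thesis by simp
qed

lemma orthonormal_basis_expansion:
  fixes B :: "(real^'n) set"
  assumes "finite B" "pairwise orthogonal B" "\<forall>u\<in>B. norm u = 1" "UNIV \<subseteq> span B"
  shows "x = (\<Sum>u\<in>B. (u \<bullet> x) *\<^sub>R u)"
proof -
  define y where "y = x - (\<Sum>u\<in>B. (u \<bullet> x) *\<^sub>R u)"
  have "orthogonal y w" if "w \<in> B" for w
    using inner_orthonormal_sum[OF assms(1-3) that, of "\<lambda>u. u \<bullet> x"] unfolding y_def orthogonal_def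
    by (simp add: inner_diff_left inner_diff_right inner_commute)
  hence "orthogonal y y" using assms(4) by (meson UNIV_I orthogonal_to_span subsetD)
  thus ?thesis unfolding y_def by (simp add: orthogonal_def)
qed

text \<open>The square root is \<open>\<Sum>u \<in> B. \<surd>\<mu>\<^sub>u u u\<^sup>T\<close> over an orthonormal eigenbasis \<open>B\<close>.\<close>
lemma pos_semidef_sqrt_exists:
  fixes M :: "real^'n^'n"
  assumes "pos_semidef M"
  shows "\<exists>S. pos_semidef S \<and> S ** S = M"
proof -
  have sym: "symmetric_mat M" using assms by (simp add: pos_semidef_def)
  obtain B where B: "finite B" "pairwise orthogonal B"
      "\<forall>u\<in>B. norm u = 1 \<and> M *v u = (u \<bullet> (M *v u)) *\<^sub>R u" "UNIV \<subseteq> span B"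
    using symmetric_mat_orthonormal_eigenbasis[OF sym, of UNIV] by auto
  have Bn: "\<forall>u\<in>B. norm u = 1" using B(3) by auto
  define \<mu> where "\<mu> u = u \<bullet> (M *v u)" for u
  have \<mu>_nonneg: "\<mu> u \<ge> 0" for u using assms by (simp add: \<mu>_def pos_semidef_def)
  define S where "S = (\<Sum>u\<in>B. sqrt (\<mu> u) *\<^sub>R outer u u)"
  have Sx: "S *v x = (\<Sum>u\<in>B. (sqrt (\<mu> u) * (u \<bullet> x)) *\<^sub>R u)" for x
    by (simp add: S_def matrix_vector_mult_sum_left scaleR_matrix_vector_assoc[symmetric] outer_mult_vector)
  have uS: "u \<bullet> (S *v x) = sqrt (\<mu> u) * (u \<bullet> x)" if "u \<in> B" for u x
    unfolding Sx by (rule inner_orthonormal_sum[OF B(1,2) Bn that])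
  have "S ** S = M"
  proof (subst matrix_eq, intro allI)
    fix x
    have "(S ** S) *v x = (\<Sum>u\<in>B. (\<mu> u * (u \<bullet> x)) *\<^sub>R u)"
      unfolding matrix_vector_mul_assoc[symmetric] Sx[of "S *v x"] using \<mu>_nonneg
      by (intro sum.cong refl) (simp add: uS mult.assoc[symmetric] real_sqrt_mult_self)
    also have "\<dots> = (\<Sum>u\<in>B. (u \<bullet> x) *\<^sub>R (M *v u))"
      using B(3) by (intro sum.cong refl) (metis \<mu>_def mult.commute scaleR_scaleR)
    also have "\<dots> = M *v (\<Sum>u\<in>B. (u \<bullet> x) *\<^sub>R u)"
      by (simp add: vec.sum matrix_vector_mult_scaleR)
    also have "\<dots> = M *v x" using orthonormal_basis_expansion[OF B(1,2) Bn B(4), of x] by simp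
    finally show "(S ** S) *v x = M *v x" .
  qed
  moreover have "pos_semidef S"
    unfolding pos_semidef_def symmetric_mat_def
  proof (intro conjI allI)
    show "transpose S = S"
      by (simp add: S_def vec_eq_iff transpose_def outer_def mult.commute)
    fix v
    have "v \<bullet> (S *v v) = (\<Sum>u\<in>B. sqrt (\<mu> u) * (u \<bullet> v)\<^sup>2)"
      by (simp add: Sx inner_sum_right inner_commute power2_eq_square mult.assoc)
    also have "\<dots> \<ge> 0" using \<mu>_nonneg by (intro sum_nonneg) simp
    finally show "v \<bullet> (S *v v) \<ge> 0" .
  qed
  ultimately show ?thesis by blast
qed

lemma pos_semidef_form_zero_imp_kernel:
  fixes S :: "real^'n^'n"
  assumes S: "pos_semidef S" and x: "x \<bullet> (S *v x) = 0"
  shows "S *v x = 0"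
proof -
  have sym: "symmetric_mat S" using S by (simp add: pos_semidef_def)
  have "y \<bullet> (S *v x) = 0" for y
  proof -
    have "2 * t * (- (y \<bullet> (S *v x))) + t\<^sup>2 * (- (y \<bullet> (S *v y))) \<le> 0" for t
    proof -
      have "0 \<le> (x + t *\<^sub>R y) \<bullet> (S *v (x + t *\<^sub>R y))"
        using S by (simp add: pos_semidef_def)
      thus ?thesis using quadratic_form_add_scaleR[OF sym, of x t y] x by simp
    qed
    from linear_coeff_zero_if_quadratic_nonpos[OF this] show ?thesis by simp
  qed
  from this[of "S *v x"] show ?thesis by simp
qed

lemma trace_congruence_pos_semidef:
  fixes S D :: "real^'n^'n"
  assumes S: "pos_semidef S" and D: "symmetric_mat D"
  shows "trace (D ** S ** D) = (\<Sum>i\<in>UNIV. (D *v axis i 1) \<bullet> (S *v (D *v axis i 1)))"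
    and "\<And>i. (D *v axis i 1) \<bullet> (S *v (D *v axis i 1)) \<ge> 0"
  using S by (simp_all add: trace_eq_sum_axis_forms matrix_vector_mul_assoc[symmetric]
      symmetric_mat_inner_mult[OF D] pos_semidef_def)

text \<open>For \<open>D = S - R\<close> one has \<open>S D + D R = S\<^sup>2 - R\<^sup>2 = 0\<close>, so the nonnegative traces of
  \<open>D S D\<close> and \<open>D R D\<close> add up to zero; hence \<open>S D = R D = 0\<close> and \<open>D\<^sup>2 = 0\<close>.\<close>
lemma pos_semidef_sqrt_unique:
  fixes S R :: "real^'n^'n"
  assumes S: "pos_semidef S" and R: "pos_semidef R" and eq: "S ** S = R ** R"
  shows "S = R"
proof -
  define D where "D = S - R"
  have symD: "symmetric_mat D"
    using S R by (simp add: D_def pos_semidef_def symmetric_mat_def transpose_def vec_eq_iff)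
  have "(S ** D + D ** R) *v x = 0 *v x" for x
    using arg_cong[OF eq, of "\<lambda>A. A *v x"]
    by (simp add: D_def matrix_vector_mult_add_rdistrib matrix_vector_mul_assoc[symmetric]
        matrix_vector_mult_diff_rdistrib matrix_vector_mult_diff_distrib)
  hence "S ** D + D ** R = 0" by (subst matrix_eq) blast
  moreover have "trace (D ** S ** D) + trace (D ** R ** D) = trace (D ** (S ** D + D ** R))"
    by (metis matrix_add_ldistrib matrix_mul_assoc trace_add trace_mul_sym)
  ultimately have "trace (D ** S ** D) + trace (D ** R ** D) = 0"
    by (simp add: trace_def)
  hence "(D *v axis i 1) \<bullet> (S *v (D *v axis i 1)) = 0 \<and> (D *v axis i 1) \<bullet> (R *v (D *v axis i 1)) = 0" for i
    using trace_congruence_pos_semidef[OF S symD] trace_congruence_pos_semidef[OF R symD]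
    by (simp add: add_nonneg_eq_0_iff sum_nonneg sum_nonneg_eq_0_iff)
  hence "S *v (D *v axis i 1) = 0 \<and> R *v (D *v axis i 1) = 0" for i
    using pos_semidef_form_zero_imp_kernel[OF S] pos_semidef_form_zero_imp_kernel[OF R] by blast
  hence "(D *v axis i 1) \<bullet> (D *v axis i 1) = 0" for i
    by (metis D_def matrix_vector_mult_diff_rdistrib diff_self inner_zero_right symmetric_mat_inner_mult[OF symD])
  hence "D *v axis i 1 = 0" for i by simp
  hence "D = 0" by (simp add: vec_eq_iff matrix_vector_mult_axis_nth[symmetric])
  thus ?thesis by (simp add: D_def)
qed

lemma psd_sqrt_eqI:
  assumes "pos_semidef S" "S ** S = M"
  shows "psd_sqrt M = S"
  unfolding psd_sqrt_def using assms pos_semidef_sqrt_unique by blast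

lemma
  fixes M :: "real^'n^'n"
  assumes "pos_semidef M"
  shows pos_semidef_psd_sqrt: "pos_semidef (psd_sqrt M)"
    and psd_sqrt_mult_self: "psd_sqrt M ** psd_sqrt M = M"
  using pos_semidef_sqrt_exists[OF assms] psd_sqrt_eqI by metis+

lemma psd_sqrt_mat_1: "psd_sqrt (mat 1) = (mat 1 :: real^'n^'n)"
  by (rule psd_sqrt_eqI) (simp_all add: pos_semidef_def symmetric_mat_def)

lemma pos_semidef_form_Cauchy_Schwarz:
  fixes A :: "real^'n^'n"
  assumes "pos_semidef A"
  shows "(x \<bullet> (A *v y))\<^sup>2 \<le> (x \<bullet> (A *v x)) * (y \<bullet> (A *v y))"
proof -
  define R where "R = psd_sqrt A"
  have R: "symmetric_mat R" "R ** R = A"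
    using pos_semidef_psd_sqrt[OF assms] psd_sqrt_mult_self[OF assms] by (simp_all add: R_def pos_semidef_def)
  have "u \<bullet> (A *v v) = (R *v u) \<bullet> (R *v v)" for u v
    by (metis R matrix_vector_mul_assoc symmetric_mat_inner_mult)
  thus ?thesis by (simp add: Cauchy_Schwarz_ineq)
qed

lemma pos_def_imp_pos_semidef: "pos_def A \<Longrightarrow> pos_semidef A"
  unfolding pos_def_def pos_semidef_def by (metis inner_zero_left order_le_less)

lemma pos_def_mult_matrix_inv:
  fixes A :: "real^'n^'n"
  assumes "pos_def A"
  shows "A ** matrix_inv A = mat 1"
proof -
  have "x = 0" if "A *v x = 0" for x
    using assms that unfolding pos_def_def by (metis inner_zero_right less_irrefl)
  hence "invertible A"
    using matrix_left_invertible_ker invertible_left_inverse by blast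
  hence "A ** matrix_inv A = mat 1 \<and> matrix_inv A ** A = mat 1"
    unfolding invertible_def matrix_inv_def by (rule someI_ex)
  thus ?thesis by blast
qed

lemma pos_semidef_matrix_inv:
  fixes A :: "real^'n^'n"
  assumes "pos_def A"
  shows "pos_semidef (matrix_inv A)"
proof -
  have inv: "A ** matrix_inv A = mat 1" by (rule pos_def_mult_matrix_inv[OF assms])
  have symA: "transpose A = A" using assms by (simp add: pos_def_def symmetric_mat_def)
  have "transpose (matrix_inv A) ** A = mat 1"
    using arg_cong[OF inv, of transpose] symA by (simp add: matrix_transpose_mul)
  hence "transpose (matrix_inv A) = matrix_inv A"
    by (metis inv matrix_mul_assoc matrix_mul_lid matrix_mul_rid)
  moreover have "v \<bullet> (matrix_inv A *v v) \<ge> 0" for v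
  proof -
    have "v \<bullet> (matrix_inv A *v v) = (matrix_inv A *v v) \<bullet> (A *v (matrix_inv A *v v))"
      by (simp add: matrix_vector_mul_assoc inv inner_commute)
    also have "\<dots> \<ge> 0" using pos_def_imp_pos_semidef[OF assms] by (simp add: pos_semidef_def)
    finally show ?thesis .
  qed
  ultimately show ?thesis by (simp add: pos_semidef_def symmetric_mat_def)
qed

lemma sos_nonneg: "sos f \<Longrightarrow> f x \<ge> 0"
  unfolding sos_def by (auto intro!: sum_list_nonneg)

lemma sos_multiplier_sublevel_subset:
  assumes "sos s" and "sos (\<lambda>x. s x * (g x - c) - h x)"
  shows "{x. g x \<le> c} \<subseteq> {x. h x \<le> 0}"
proof
  fix x assume "x \<in> {x. g x \<le> c}"
  hence "s x * (g x - c) \<le> 0" using sos_nonneg[OF assms(1), of x] by (simp add: mult_nonneg_nonpos)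
  thus "x \<in> {x. h x \<le> 0}" using sos_nonneg[OF assms(2), of x] by simp
qed

lemma sos_multiplier_sublevel_subset_Inter:
  assumes "\<And>j. j \<in> J \<Longrightarrow> sos (s j)" and "\<And>j. j \<in> J \<Longrightarrow> sos (\<lambda>x. s j x * h x - \<sigma> j x)"
  shows "{x. h x \<le> 0} \<subseteq> {x. \<forall>j\<in>J. \<sigma> j x \<le> 0}"
proof (intro subsetI CollectI ballI)
  fix x j assume "x \<in> {x. h x \<le> 0}" and j: "j \<in> J"
  hence "s j x * h x \<le> 0" using sos_nonneg[OF assms(1)[OF j], of x] by (simp add: mult_nonneg_nonpos)
  thus "\<sigma> j x \<le> 0" using sos_nonneg[OF assms(2)[OF j], of x] by simp
qed

lemma gram_sum_form_nonneg:
  fixes F :: "'h \<Rightarrow> real^'c^'k"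
  shows "v \<bullet> ((\<Sum>Hi\<leftarrow>Hs. transpose (F Hi) ** F Hi) *v v) \<ge> 0"
proof (induction Hs)
  case (Cons a Hs)
  have "v \<bullet> ((transpose (F a) ** F a) *v v) = (F a *v v) \<bullet> (F a *v v)"
    by (simp only: matrix_vector_mul_assoc[symmetric] inner_transpose_mult)
  with Cons show ?case by (simp add: matrix_vector_mult_add_rdistrib inner_add_right)
qed simp

lemma sos_mat_uminus_imp_form_nonpos:
  fixes H :: "real^'n \<Rightarrow> real^'r^'r"
  assumes "sos_mat (\<lambda>x. - H x)"
  shows "v \<bullet> (H x *v v) \<le> 0"
proof -
  obtain Hs :: "(real^'n \<Rightarrow> real^'r^'r) list"
    where "(\<lambda>x. - H x) = (\<lambda>x. \<Sum>Hi\<leftarrow>Hs. transpose (Hi x) ** Hi x)"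
    using assms unfolding sos_mat_def by blast
  hence "- H x = (\<Sum>Hi\<leftarrow>Hs. transpose (Hi x) ** Hi x)" by metis
  hence "v \<bullet> ((- H x) *v v) \<ge> 0" using gram_sum_form_nonneg[of v "\<lambda>Hi. Hi x" Hs] by simp
  thus ?thesis by (simp add: matrix_vector_mult_uminus_left)
qed

section \<open>The data-consistent ellipsoid\<close>

text \<open>The matrix \<open>\<zeta> = [A B]\<^sup>T\<close> of the paper, so that \<open>A z + B y = \<zeta>\<^sup>T (z, y)\<close>.\<close>
definition zeta_mat :: "real ^ 'a ^ 'n \<Rightarrow> real ^ 'b ^ 'n \<Rightarrow> real ^ 'n ^ ('a + 'b)" where
  "zeta_mat A B = (\<chi> k j. case k of Inl i \<Rightarrow> A $ j $ i | Inr l \<Rightarrow> B $ j $ l)"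

lemma transpose_zeta_mat_mult_stack: "transpose (zeta_mat A B) *v stack z y = A *v z + B *v y"
  by (simp add: vec_eq_iff zeta_mat_def transpose_def matrix_vector_mult_def stack_def sum_UNIV_Plus)

text \<open>Each sample is consistent with the true \<open>\<zeta>\<close>: with \<open>\<alpha> = dx \<bullet> u\<close> and \<open>\<beta> = r \<bullet> \<zeta> u\<close> the form
  equals \<open>(\<alpha> - \<beta>)\<^sup>2 - \<omega> |u|\<^sup>2 = (d \<bullet> u)\<^sup>2 - \<omega> |u|\<^sup>2\<close>.\<close>
lemma noisy_sample_form_nonpos:
  fixes u dx d :: "real^'n" and r :: "real^'p" and Zt :: "real^'n^'p"
  assumes dx: "dx = transpose Zt *v r + d" and noise: "(norm d)\<^sup>2 \<le> \<omega>"
  shows "u \<bullet> ((- (\<omega> *\<^sub>R mat 1) + outer dx dx) *v u) + u \<bullet> (transpose (- outer r dx) *v (Zt *v u))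
       + (Zt *v u) \<bullet> ((- outer r dx) *v u) + (Zt *v u) \<bullet> (outer r r *v (Zt *v u)) \<le> 0"
proof -
  define \<alpha> where "\<alpha> = dx \<bullet> u"
  define \<beta> where "\<beta> = r \<bullet> (Zt *v u)"
  have "\<alpha> - \<beta> = d \<bullet> u"
    using inner_transpose_mult[of u Zt r] unfolding \<alpha>_def \<beta>_def dx
    by (simp add: inner_add_left inner_add_right inner_commute)
  have "u \<bullet> ((- (\<omega> *\<^sub>R mat 1) + outer dx dx) *v u) + u \<bullet> (transpose (- outer r dx) *v (Zt *v u))
       + (Zt *v u) \<bullet> ((- outer r dx) *v u) + (Zt *v u) \<bullet> (outer r r *v (Zt *v u))
      = - \<omega> * (u \<bullet> u) + (\<alpha> - \<beta>)\<^sup>2"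
    by (simp add: \<alpha>_def \<beta>_def matrix_vector_mult_add_rdistrib matrix_vector_mult_uminus_left
        transpose_uminus transpose_outer outer_mult_vector inner_commute
        scaleR_matrix_vector_assoc[symmetric] power2_eq_square algebra_simps)
  also have "(\<alpha> - \<beta>)\<^sup>2 \<le> (d \<bullet> d) * (u \<bullet> u)"
    unfolding \<open>\<alpha> - \<beta> = d \<bullet> u\<close> by (rule Cauchy_Schwarz_ineq)
  also have "\<dots> \<le> \<omega> * (u \<bullet> u)"
    using noise by (intro mult_right_mono) (simp_all add: power2_norm_eq_inner)
  finally show ?thesis by simp
qed

text \<open>S-procedure: evaluate the LMI at \<open>(u, \<zeta> u, A\<^sub>i\<^sup>-\<^sup>1 B\<^sub>i u)\<close> and discard the data terms, which
  are nonpositive with nonnegative multipliers.\<close>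
lemma lmi_imp_ellipsoid:
  fixes Ai :: "real^'p^'p" and Bi Zt :: "real^'n^'p"
    and c :: "nat \<Rightarrow> real^'n^'n" and b :: "nat \<Rightarrow> real^'n^'p" and a :: "nat \<Rightarrow> real^'p^'p"
  assumes LMI: "neg_semidef (blk3
        (- mat 1 - (\<Sum>j<T. \<tau> j *\<^sub>R c j)) (transpose Bi - (\<Sum>j<T. \<tau> j *\<^sub>R transpose (b j))) (transpose Bi)
        (Bi - (\<Sum>j<T. \<tau> j *\<^sub>R b j)) (Ai - (\<Sum>j<T. \<tau> j *\<^sub>R a j)) 0
        Bi 0 (- Ai))"
    and Ai: "pos_def Ai"
    and tau: "\<And>j. j < T \<Longrightarrow> \<tau> j \<ge> 0"
    and data: "\<And>j. j < T \<Longrightarrow> u \<bullet> (c j *v u) + u \<bullet> (transpose (b j) *v (Zt *v u))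
       + (Zt *v u) \<bullet> (b j *v u) + (Zt *v u) \<bullet> (a j *v (Zt *v u)) \<le> 0"
  shows "(Zt *v u + matrix_inv Ai *v (Bi *v u)) \<bullet> (Ai *v (Zt *v u + matrix_inv Ai *v (Bi *v u))) \<le> u \<bullet> u"
proof -
  define w where "w = matrix_inv Ai *v (Bi *v u)"
  define z where "z = Zt *v u"
  have Aw: "Ai *v w = Bi *v u"
    unfolding w_def by (metis matrix_vector_mul_assoc matrix_vector_mul_lid pos_def_mult_matrix_inv[OF Ai])
  have symA: "symmetric_mat Ai" using Ai by (simp add: pos_def_def)
  define D where "D j = u \<bullet> (c j *v u) + u \<bullet> (transpose (b j) *v z) + z \<bullet> (b j *v u) + z \<bullet> (a j *v z)" for j
  have "(\<Sum>j<T. \<tau> j * D j) \<le> 0"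
    using tau data unfolding D_def z_def by (intro sum_nonpos) (simp add: mult_nonneg_nonpos)
  moreover have "- (u \<bullet> u) - (\<Sum>j<T. \<tau> j * D j) + 2 * (z \<bullet> (Bi *v u)) + z \<bullet> (Ai *v z) + w \<bullet> (Bi *v u) \<le> 0"
  proof -
    have "stack u (stack z w) \<bullet> (blk3
        (- mat 1 - (\<Sum>j<T. \<tau> j *\<^sub>R c j)) (transpose Bi - (\<Sum>j<T. \<tau> j *\<^sub>R transpose (b j))) (transpose Bi)
        (Bi - (\<Sum>j<T. \<tau> j *\<^sub>R b j)) (Ai - (\<Sum>j<T. \<tau> j *\<^sub>R a j)) 0
        Bi 0 (- Ai) *v stack u (stack z w)) \<le> 0"
      using LMI unfolding neg_semidef_def by blast
    thus ?thesis
      unfolding inner_stack_blk3_mult_stack D_def matrix_vector_mult_diff_rdistrib inner_diff_right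
        inner_sum_scaleR_mult matrix_vector_mult_uminus_left inner_transpose_mult Aw
      by (simp add: sum.distrib distrib_left inner_commute[of "Bi *v u"])
  qed
  moreover have "(z + w) \<bullet> (Ai *v (z + w)) = z \<bullet> (Ai *v z) + 2 * (z \<bullet> (Bi *v u)) + w \<bullet> (Bi *v u)"
    using symmetric_mat_inner_mult[OF symA, of w z] Aw
    by (simp add: matrix_vector_right_distrib inner_add_left inner_add_right inner_commute)
  ultimately show ?thesis unfolding z_def w_def by linarith
qed

section \<open>The Lie derivative bound\<close>

text \<open>Evaluate the form at \<open>(1, P w / 2, g / (2 \<eta>))\<close>, which maximises it in the last two blocks.\<close>
lemma blk3_form_nonpos_imp_schur_bound:
  fixes P :: "real^'p^'p" and w :: "real^'p" and g :: "real^'n"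
  assumes neg: "\<And>v. v \<bullet> (blk3
        (scal_mat c0) (transpose (col_mat (\<eta> *\<^sub>R (P *v w)))) (transpose (col_mat g))
        (col_mat (\<eta> *\<^sub>R (P *v w))) (- (2 * \<eta>) *\<^sub>R mat 1) 0
        (col_mat g) 0 (- (2 * \<eta>) *\<^sub>R mat 1) *v v) \<le> 0"
    and eta: "\<eta> > 0"
  shows "c0 + \<eta> / 2 * ((P *v w) \<bullet> (P *v w)) + (g \<bullet> g) / (2 * \<eta>) \<le> 0"
proof -
  define s where "s = (P *v w) \<bullet> (P *v w)"
  define q where "q = g \<bullet> g"
  have one: "(1::real^unit) \<bullet> (scal_mat c0 *v 1) = c0"
    "\<And>y v. (1::real^unit) \<bullet> (transpose (col_mat y) *v v) = y \<bullet> v"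
    "\<And>y v. v \<bullet> (col_mat y *v (1::real^unit)) = v \<bullet> y"
    by (simp_all add: scal_mat_def col_mat_def transpose_def matrix_vector_mult_def inner_vec_def UNIV_unit)
  have "stack 1 (stack ((1/2) *\<^sub>R (P *v w)) ((1/(2*\<eta>)) *\<^sub>R g)) \<bullet> (blk3
        (scal_mat c0) (transpose (col_mat (\<eta> *\<^sub>R (P *v w)))) (transpose (col_mat g))
        (col_mat (\<eta> *\<^sub>R (P *v w))) (- (2 * \<eta>) *\<^sub>R mat 1) 0
        (col_mat g) 0 (- (2 * \<eta>) *\<^sub>R mat 1) *v stack 1 (stack ((1/2) *\<^sub>R (P *v w)) ((1/(2*\<eta>)) *\<^sub>R g)))
      = c0 + \<eta>/2 * s + 1/(2*\<eta>) * q + \<eta>/2 * s + (-(2*\<eta>)) * (1/4) * s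
        + 1/(2*\<eta>) * q + (-(2*\<eta>)) * (1/(2*\<eta>))\<^sup>2 * q"
    unfolding inner_stack_blk3_mult_stack one
    by (simp add: scaleR_matrix_vector_assoc[symmetric] matrix_vector_mult_uminus_left s_def q_def power2_eq_square)
  also have "\<dots> = c0 + \<eta> / 2 * s + q / (2 * \<eta>)"
    using eta by (simp add: field_simps power2_eq_square)
  finally show ?thesis using neg unfolding s_def q_def by metis
qed

text \<open>With \<open>e = \<zeta> g + A\<^sub>i\<^sup>-\<^sup>1 B\<^sub>i g\<close> in the ellipsoid, Cauchy-Schwarz in the \<open>A\<^sub>i\<close>-inner product gives
  \<open>e \<bullet> w \<le> |g| |P w| \<le> \<eta>/2 |P w|\<^sup>2 + |g|\<^sup>2/(2 \<eta>)\<close>, which the Schur bound pays for.\<close>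
lemma ellipsoid_lie_derivative_bound:
  fixes Ai :: "real^'p^'p" and Zt Bi :: "real^'n^'p" and g :: "real^'n" and w :: "real^'p"
  defines "P \<equiv> psd_sqrt (matrix_inv Ai)"
  assumes Ai: "pos_def Ai"
    and ellipsoid: "(Zt *v g + matrix_inv Ai *v (Bi *v g)) \<bullet> (Ai *v (Zt *v g + matrix_inv Ai *v (Bi *v g))) \<le> g \<bullet> g"
    and H: "\<And>v. v \<bullet> (blk3
        (scal_mat (L + g \<bullet> (transpose (- (matrix_inv Ai ** Bi)) *v w)))
        (transpose (col_mat (\<eta> *\<^sub>R (P *v w)))) (transpose (col_mat g))
        (col_mat (\<eta> *\<^sub>R (P *v w))) (- (2 * \<eta>) *\<^sub>R mat 1) 0
        (col_mat g) 0 (- (2 * \<eta>) *\<^sub>R mat 1) *v v) \<le> 0"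
    and eta: "\<eta> > 0"
  shows "g \<bullet> (transpose Zt *v w) \<le> - L"
proof -
  have schur: "L + g \<bullet> (transpose (- (matrix_inv Ai ** Bi)) *v w)
      + \<eta> / 2 * ((P *v w) \<bullet> (P *v w)) + (g \<bullet> g) / (2 * \<eta>) \<le> 0"
    by (rule blk3_form_nonpos_imp_schur_bound[OF H eta])
  define e where "e = Zt *v g + matrix_inv Ai *v (Bi *v g)"
  define s where "s = (P *v w) \<bullet> (P *v w)"
  define q where "q = g \<bullet> g"
  define m where "m = \<eta> / 2 * s + q / (2 * \<eta>)"
  have inv: "Ai ** matrix_inv Ai = mat 1" by (rule pos_def_mult_matrix_inv[OF Ai])
  have P: "symmetric_mat P" "P ** P = matrix_inv Ai"
    using pos_semidef_psd_sqrt[OF pos_semidef_matrix_inv[OF Ai]]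
      psd_sqrt_mult_self[OF pos_semidef_matrix_inv[OF Ai]]
    by (simp_all add: P_def pos_semidef_def)
  have "s \<ge> 0" "q \<ge> 0" unfolding s_def q_def by simp_all
  hence "m \<ge> 0" unfolding m_def using eta by simp
  have "(e \<bullet> w)\<^sup>2 = (e \<bullet> (Ai *v (matrix_inv Ai *v w)))\<^sup>2"
    by (simp add: matrix_vector_mul_assoc inv)
  also have "\<dots> \<le> (e \<bullet> (Ai *v e)) * ((matrix_inv Ai *v w) \<bullet> (Ai *v (matrix_inv Ai *v w)))"
    by (rule pos_semidef_form_Cauchy_Schwarz[OF pos_def_imp_pos_semidef[OF Ai]])
  also have "(matrix_inv Ai *v w) \<bullet> (Ai *v (matrix_inv Ai *v w)) = w \<bullet> (P *v (P *v w))"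
    by (simp add: matrix_vector_mul_assoc inv P(2) inner_commute)
  also have "\<dots> = s"
    unfolding s_def by (rule symmetric_mat_inner_mult[OF P(1)])
  also have "(e \<bullet> (Ai *v e)) * s \<le> q * s"
    using ellipsoid \<open>s \<ge> 0\<close> unfolding e_def q_def by (intro mult_right_mono)
  also have "q * s \<le> m\<^sup>2"
  proof -
    have "m\<^sup>2 = (\<eta> / 2 * s - q / (2 * \<eta>))\<^sup>2 + q * s"
      unfolding m_def using eta by (simp add: field_simps power2_eq_square)
    thus ?thesis by simp
  qed
  finally have "e \<bullet> w \<le> m" using \<open>m \<ge> 0\<close> by (rule power2_le_imp_le)
  moreover have "g \<bullet> (transpose Zt *v w) = e \<bullet> w - (matrix_inv Ai *v (Bi *v g)) \<bullet> w"
    and "g \<bullet> (transpose (- (matrix_inv Ai ** Bi)) *v w) = - ((matrix_inv Ai *v (Bi *v g)) \<bullet> w)"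
    unfolding e_def inner_transpose_mult
    by (simp_all add: inner_add_left matrix_vector_mult_uminus_left matrix_vector_mul_assoc)
  ultimately show ?thesis using schur unfolding m_def s_def q_def by linarith
qed

section \<open>Invariance of sublevel sets\<close>

lemma
  assumes "forward_interval J"
  shows forward_interval_nonneg: "t \<in> J \<Longrightarrow> 0 \<le> t"
    and forward_interval_atLeastAtMost_subset: "t \<in> J \<Longrightarrow> {0..t} \<subseteq> J"
  using assms unfolding forward_interval_def by auto

lemma last_zero_before_pos:
  fixes \<phi> :: "real \<Rightarrow> real"
  assumes "0 \<le> t" and cont: "continuous_on {0..t} \<phi>" and "\<phi> 0 \<le> 0" and "\<phi> t > 0"
  obtains s where "0 \<le> s" "s < t" "\<phi> s = 0" "\<And>r. s < r \<Longrightarrow> r \<le> t \<Longrightarrow> \<phi> r > 0"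
proof -
  define U where "U = {0..t} \<inter> \<phi> -` {..0}"
  have "closed U" unfolding U_def by (rule continuous_closed_preimage[OF cont]) auto
  moreover have "bounded U" unfolding U_def by (rule bounded_Int) simp
  ultimately have "compact U" by (simp add: compact_eq_bounded_closed)
  moreover have "U \<noteq> {}" using assms unfolding U_def by auto
  ultimately obtain s where s: "s \<in> U" and smax: "\<And>r. r \<in> U \<Longrightarrow> r \<le> s"
    by (meson compact_attains_sup)
  have "0 \<le> s" "s \<le> t" "\<phi> s \<le> 0" using s unfolding U_def by auto
  have pos: "\<phi> r > 0" if "s < r" "r \<le> t" for r
  proof (rule ccontr)
    assume "\<not> \<phi> r > 0"
    hence "r \<in> U" using that \<open>0 \<le> s\<close> unfolding U_def by auto
    with smax[OF this] that show False by simp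
  qed
  have "continuous_on {s..t} \<phi>" using continuous_on_subset[OF cont] \<open>0 \<le> s\<close> by auto
  then obtain z where z: "s \<le> z" "z \<le> t" "\<phi> z = 0"
    using IVT'[OF \<open>\<phi> s \<le> 0\<close> less_imp_le[OF \<open>\<phi> t > 0\<close>] \<open>s \<le> t\<close>] by blast
  have "\<not> s < z" using pos[of z] z by linarith
  hence zero: "\<phi> s = 0" using z by simp
  hence "s < t" using \<open>s \<le> t\<close> \<open>\<phi> t > 0\<close> by (cases "s = t") auto
  from that[OF \<open>0 \<le> s\<close> this zero pos] show ?thesis .
qed

lemma nonpos_if_deriv_neg_at_zeros:
  fixes \<phi> \<phi>' :: "real \<Rightarrow> real"
  assumes J: "forward_interval J"
    and der: "\<And>t. t \<in> J \<Longrightarrow> (\<phi> has_real_derivative \<phi>' t) (at t within J)"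
    and neg: "\<And>t. t \<in> J \<Longrightarrow> \<phi> t = 0 \<Longrightarrow> \<phi>' t < 0"
    and init: "\<phi> 0 \<le> 0" and t: "t \<in> J"
  shows "\<phi> t \<le> 0"
proof (rule ccontr)
  assume "\<not> \<phi> t \<le> 0"
  hence "\<phi> t > 0" by simp
  have sub: "{0..t} \<subseteq> J" by (rule forward_interval_atLeastAtMost_subset[OF J t])
  have "continuous_on J \<phi>"
    unfolding continuous_on_eq_continuous_within using der DERIV_continuous by blast
  hence cont: "continuous_on {0..t} \<phi>" using sub continuous_on_subset by blast
  obtain s where s: "0 \<le> s" "s < t" "\<phi> s = 0" and pos: "\<And>r. s < r \<Longrightarrow> r \<le> t \<Longrightarrow> \<phi> r > 0"
    using last_zero_before_pos[OF forward_interval_nonneg[OF J t] cont init \<open>\<phi> t > 0\<close>] by blast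
  have sJ: "s \<in> J" using sub s by auto
  obtain d where "d > 0" and dec: "\<And>h. h > 0 \<Longrightarrow> s + h \<in> J \<Longrightarrow> h < d \<Longrightarrow> \<phi> (s + h) < \<phi> s"
    using has_real_derivative_neg_dec_right[OF der[OF sJ] neg[OF sJ s(3)]] by blast
  define h where "h = min (d / 2) (t - s)"
  have h: "h > 0" "h < d" "s + h \<le> t" using \<open>d > 0\<close> s(2) unfolding h_def by linarith+
  hence "s + h \<in> J" using sub s(1) by auto
  from dec[OF h(1) this h(2)] have "\<phi> (s + h) < \<phi> s" .
  moreover have "\<phi> (s + h) > 0" using pos h(1,3) by simp
  ultimately show False using s(3) by linarith
qed

lemma poly_fun_differentiable: "poly_fun f \<Longrightarrow> f differentiable (at x)"
  by (induction rule: poly_fun.induct)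
    (simp_all add: bounded_linear_imp_differentiable[OF bounded_linear_vec_nth])

lemma has_derivative_eq_grad_inner:
  assumes "(f has_derivative D) (at x)"
  shows "D v = grad f x \<bullet> v"
proof -
  have lin: "linear D" by (rule has_derivative_linear[OF assms])
  have "D v = D (\<Sum>i\<in>UNIV. (v $ i) *\<^sub>R axis i 1)"
    using basis_expansion[of v] by (simp add: scalar_mult_eq_scaleR)
  also have "\<dots> = (\<Sum>i\<in>UNIV. (v $ i) * D (axis i 1))"
    by (simp add: linear_sum[OF lin] linear_scale[OF lin])
  also have "\<dots> = grad f x \<bullet> v"
    by (simp add: grad_def frechet_derivative_at[OF assms, symmetric] inner_vec_def mult.commute)
  finally show ?thesis .
qed

lemma has_real_derivative_comp_grad:
  assumes "h differentiable (at (x t))" and "(x has_vector_derivative v) (at t within J)"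
  shows "((\<lambda>s. h (x s)) has_real_derivative (grad h (x t) \<bullet> v)) (at t within J)"
proof -
  obtain D where D: "(h has_derivative D) (at (x t))"
    using assms(1) unfolding differentiable_def by blast
  have "((h \<circ> x) has_derivative (D \<circ> (\<lambda>s. s *\<^sub>R v))) (at t within J)"
    using assms(2) D unfolding has_vector_derivative_def
    by (intro diff_chain_within) (auto intro: has_derivative_at_withinI)
  moreover have "D \<circ> (\<lambda>s. s *\<^sub>R v) = (*) (grad h (x t) \<bullet> v)"
    using linear_scale[OF has_derivative_linear[OF D]] has_derivative_eq_grad_inner[OF D]
    by (auto simp: fun_eq_iff)
  ultimately show ?thesis unfolding has_field_derivative_def by (simp add: o_def)
qed

lemma invariant_set_sublevel:
  assumes diff: "\<And>x. h differentiable (at x)"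
    and boundary: "\<And>x. h x = 0 \<Longrightarrow> grad h x \<bullet> f x < 0"
  shows "invariant_set f {x. h x \<le> 0}"
  unfolding invariant_set_def
proof (intro allI impI ballI)
  fix x J t
  assume "maximal_solution f x J \<and> x 0 \<in> {x. h x \<le> 0}" and t: "t \<in> J"
  hence J: "forward_interval J" and sol: "is_solution f x J" and init: "h (x 0) \<le> 0"
    unfolding maximal_solution_def by auto
  have "h (x t) \<le> 0"
  proof (rule nonpos_if_deriv_neg_at_zeros[of J "\<lambda>s. h (x s)" "\<lambda>s. grad h (x s) \<bullet> f (x s)", OF J _ _ init t])
    fix s assume "s \<in> J"
    hence "(x has_vector_derivative f (x s)) (at s within J)"
      using sol unfolding is_solution_def by blast
    from has_real_derivative_comp_grad[OF diff this]
    show "((\<lambda>s. h (x s)) has_real_derivative grad h (x s) \<bullet> f (x s)) (at s within J)" .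
  next
    fix s assume "h (x s) = 0"
    then show "grad h (x s) \<bullet> f (x s) < 0" by (rule boundary)
  qed
  then show "x t \<in> {x. h x \<le> 0}" by simp
qed

theorem mainTheorem5:
  fixes Astar :: "real ^ 'a ^ 'n" and Bstar :: "real ^ 'b ^ 'n"
    and Z :: "real ^ 'n \<Rightarrow> real ^ 'a" and W :: "real ^ 'n \<Rightarrow> real ^ 'm ^ 'b"
    and T :: nat and xs :: "nat \<Rightarrow> real ^ 'n" and us :: "nat \<Rightarrow> real ^ 'm"
    and dxs :: "nat \<Rightarrow> real ^ 'n" and ds :: "nat \<Rightarrow> real ^ 'n"
    and \<omega> \<epsilon> :: real
    and Ai :: "real ^ ('a + 'b) ^ ('a + 'b)" and Bi :: "real ^ 'n ^ ('a + 'b)"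
    and \<tau> :: "nat \<Rightarrow> real"
    and q :: nat and \<sigma> :: "nat \<Rightarrow> real ^ 'n \<Rightarrow> real" and lam :: "real ^ 'n \<Rightarrow> real"
    and \<eta>bar :: real
    and ell \<eta> h :: "real ^ 'n \<Rightarrow> real" and K :: "real ^ 'n \<Rightarrow> real ^ 'm"
    and s :: "nat \<Rightarrow> real ^ 'n \<Rightarrow> real" and vsig :: "real ^ 'n \<Rightarrow> real" and \<theta> :: real
  defines "c \<equiv> \<lambda>j. - (\<omega> *\<^sub>R mat 1) + outer (dxs j) (dxs j)"
    and "b \<equiv> \<lambda>j. - outer (stack (Z (xs j)) (W (xs j) *v us j)) (dxs j)"
    and "a \<equiv> \<lambda>j. outer (stack (Z (xs j)) (W (xs j) *v us j)) (stack (Z (xs j)) (W (xs j) *v us j))"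
    and "H \<equiv> \<lambda>x.
        let \<zeta>bar = - (matrix_inv Ai ** Bi);
            Pbar = psd_sqrt (matrix_inv Ai);
            Qbar = (mat 1 :: real ^ 'n ^ 'n);
            ZW = stack (Z x) (W x *v K x)
        in blk3
        (scal_mat (ell x * h x + \<epsilon> + grad h x \<bullet> (transpose \<zeta>bar *v ZW)))
        (transpose (col_mat (\<eta> x *\<^sub>R (Pbar *v ZW))))
        (transpose (col_mat (psd_sqrt Qbar *v grad h x)))
        (col_mat (\<eta> x *\<^sub>R (Pbar *v ZW)))
        (- (2 * \<eta> x) *\<^sub>R mat 1)
        0
        (col_mat (psd_sqrt Qbar *v grad h x))
        0
        (- (2 * \<eta> x) *\<^sub>R mat 1)"
    and "Sset \<equiv> {x. \<forall>j\<in>{1..q}. \<sigma> j x \<le> 0}"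
    and "L\<theta> \<equiv> {x. lam x \<le> \<theta>}"
    and "Iset \<equiv> {x. h x \<le> 0}"
  assumes Z_mono: "\<And>i. monomial_fun (\<lambda>x. Z x $ i)"
    and W_mono: "\<And>i k. monomial_fun (\<lambda>x. W x $ i $ k)"
    and data: "\<And>j. j < T \<Longrightarrow> dxs j = Astar *v Z (xs j) + Bstar *v (W (xs j) *v us j) + ds j"
    and noise: "\<And>j. j < T \<Longrightarrow> (norm (ds j))\<^sup>2 \<le> \<omega>"
    and eps_pos: "\<epsilon> > 0"
    and Ai_sym: "symmetric_mat Ai"
    and LMI: "neg_semidef (blk3
        (- mat 1 - (\<Sum>j<T. \<tau> j *\<^sub>R c j)) (transpose Bi - (\<Sum>j<T. \<tau> j *\<^sub>R transpose (b j))) (transpose Bi)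
        (Bi - (\<Sum>j<T. \<tau> j *\<^sub>R b j)) (Ai - (\<Sum>j<T. \<tau> j *\<^sub>R a j)) 0
        Bi 0 (- Ai))"
    and Ai_pd: "pos_def Ai"
    and tau_nonneg: "\<And>j. j < T \<Longrightarrow> \<tau> j \<ge> 0"
    and \<sigma>_poly: "\<And>j. j \<in> {1..q} \<Longrightarrow> poly_fun (\<sigma> j)"
    and lam_poly: "poly_fun lam"
    and lam_nonneg: "\<And>x. lam x \<ge> 0"
    and \<eta>bar_pos: "\<eta>bar > 0"
    and ell_poly: "poly_fun ell" and \<eta>_poly: "poly_fun \<eta>" and h_poly: "poly_fun h"
    and K_poly: "poly_vec K"
    and s_sos: "\<And>j. j \<in> {1..q} \<Longrightarrow> sos (s j)"
    and vsig_sos: "sos vsig"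
    and \<theta>_nonneg: "\<theta> \<ge> 0"
    and sos1: "sos (\<lambda>x. \<eta> x - \<eta>bar)"
    and sos2: "sos_mat (\<lambda>x. - H x)"
    and sos3: "sos (\<lambda>x. vsig x * (lam x - \<theta>) - h x)"
    and sos4: "\<And>j. j \<in> {1..q} \<Longrightarrow> sos (\<lambda>x. s j x * h x - \<sigma> j x)"
  shows "invariant_set (\<lambda>x. Astar *v Z x + Bstar *v (W x *v K x)) Iset
         \<and> L\<theta> \<subseteq> Iset \<and> Iset \<subseteq> Sset"
proof -
  let ?f = "\<lambda>x. Astar *v Z x + Bstar *v (W x *v K x)"
  define Zt where "Zt = zeta_mat Astar Bstar"
  have ellipsoid: "(Zt *v u + matrix_inv Ai *v (Bi *v u)) \<bullet> (Ai *v (Zt *v u + matrix_inv Ai *v (Bi *v u)))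
      \<le> u \<bullet> u" for u
  proof (rule lmi_imp_ellipsoid[OF LMI Ai_pd tau_nonneg])
    fix j assume j: "j < T"
    have "dxs j = transpose Zt *v stack (Z (xs j)) (W (xs j) *v us j) + ds j"
      using data[OF j] unfolding Zt_def transpose_zeta_mat_mult_stack .
    from noisy_sample_form_nonpos[OF this noise[OF j]]
    show "u \<bullet> (c j *v u) + u \<bullet> (transpose (b j) *v (Zt *v u))
        + (Zt *v u) \<bullet> (b j *v u) + (Zt *v u) \<bullet> (a j *v (Zt *v u)) \<le> 0"
      unfolding c_def b_def a_def .
  qed
  have lie: "grad h x \<bullet> ?f x \<le> - (ell x * h x + \<epsilon>)" for x
  proof -
    have "\<eta> x > 0" using sos_nonneg[OF sos1, of x] \<eta>bar_pos by simp
    have "v \<bullet> (H x *v v) \<le> 0" for v by (rule sos_mat_uminus_imp_form_nonpos[OF sos2])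
    from ellipsoid_lie_derivative_bound[OF Ai_pd ellipsoid
        this[unfolded H_def Let_def psd_sqrt_mat_1 matrix_vector_mul_lid] \<open>\<eta> x > 0\<close>]
    show ?thesis unfolding Zt_def transpose_zeta_mat_mult_stack .
  qed
  have "invariant_set ?f Iset"
    unfolding Iset_def
  proof (rule invariant_set_sublevel)
    show "h differentiable (at x)" for x by (rule poly_fun_differentiable[OF h_poly])
    show "grad h x \<bullet> ?f x < 0" if "h x = 0" for x using lie[of x] that eps_pos by simp
  qed
  moreover have "L\<theta> \<subseteq> Iset"
    unfolding L\<theta>_def Iset_def by (rule sos_multiplier_sublevel_subset[OF vsig_sos sos3])
  moreover have "Iset \<subseteq> Sset"
    unfolding Iset_def Sset_def using s_sos sos4 by (rule sos_multiplier_sublevel_subset_Inter)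
  ultimately show ?thesis by blast
qed

end
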